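(* Let $\mathbf V$ be a variety of monoids satisfying the identities $xyx\approx xyx^2$ and $x^2y^2\approx y^2x^2$. (i) If $\mathbf E\nsubseteq\mathbf V$ then $\mathbf V\subseteq\mathbf K$. (ii) If $\mathbf F\nsubseteq\mathbf V$ then $\mathbf V\subseteq\mathbf Q$.
   Context: Varieties are monoid varieties (monoids as algebras with multiplication and a nullary operation for the identity element). The following varieties are defined by the listed identities: $\mathbf K$: $xyx\approx xyx^2$, $x^2y^2\approx y^2x^2$, $x^2y\approx x^2yx$; $\mathbf Q$: $xyx\approx xyx^2$, $x^2y^2\approx y^2x^2$, $xyx\approx x^2yx$; $\mathbf E$: $x^2y^2\approx y^2x^2$, $x^2\approx x^3$, $yx^2\approx xyx$; $\mathbf F$: $xyx\approx xyx^2$, $x^2y^2\approx y^2x^2$, $xyzxy\approx yxzxy$, $x^2y\approx x^2yx$. *)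

theory Defs
  imports Main
begin

text \<open>A monoid variety is represented (via Birkhoff's completeness theorem)
  by its equational theory: a fully invariant congruence on the free monoid of words.\<close>

type_synonym word = "nat list"

definition subst_word :: "(nat \<Rightarrow> word) \<Rightarrow> word \<Rightarrow> word" where
  "subst_word \<sigma> w = concat (map \<sigma> w)"

inductive_set eq_cl :: "(word \<times> word) set \<Rightarrow> (word \<times> word) set" for \<Sigma> where
  base: "(u, v) \<in> \<Sigma> \<Longrightarrow> (u, v) \<in> eq_cl \<Sigma>"
| refl: "(u, u) \<in> eq_cl \<Sigma>"
| sym: "(u, v) \<in> eq_cl \<Sigma> \<Longrightarrow> (v, u) \<in> eq_cl \<Sigma>"
| trans: "(u, v) \<in> eq_cl \<Sigma> \<Longrightarrow> (v, w) \<in> eq_cl \<Sigma> \<Longrightarrow> (u, w) \<in> eq_cl \<Sigma>"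
| ctx: "(u, v) \<in> eq_cl \<Sigma> \<Longrightarrow> (p @ u @ q, p @ v @ q) \<in> eq_cl \<Sigma>"
| subst: "(u, v) \<in> eq_cl \<Sigma> \<Longrightarrow> (subst_word \<sigma> u, subst_word \<sigma> v) \<in> eq_cl \<Sigma>"

definition is_variety :: "(word \<times> word) set \<Rightarrow> bool" where
  "is_variety V \<longleftrightarrow> eq_cl V = V"

definition var_def_by :: "(word \<times> word) set \<Rightarrow> (word \<times> word) set" where
  "var_def_by \<Sigma> = eq_cl \<Sigma>"

definition satisfies :: "(word \<times> word) set \<Rightarrow> word \<Rightarrow> word \<Rightarrow> bool" where
  "satisfies V u v \<longleftrightarrow> (u, v) \<in> V"

text \<open>Inclusion of varieties: V \<subseteq> W iff every identity of W holds in V.\<close>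
definition subvariety :: "(word \<times> word) set \<Rightarrow> (word \<times> word) set \<Rightarrow> bool" where
  "subvariety V W \<longleftrightarrow> W \<subseteq> V"

abbreviation "vx \<equiv> (0::nat)"
abbreviation "vy \<equiv> (1::nat)"
abbreviation "vz \<equiv> (2::nat)"

definition K_ids :: "(word \<times> word) set" where
  "K_ids = {([vx,vy,vx], [vx,vy,vx,vx]), ([vx,vx,vy,vy], [vy,vy,vx,vx]),
            ([vx,vx,vy], [vx,vx,vy,vx])}"

definition Q_ids :: "(word \<times> word) set" where
  "Q_ids = {([vx,vy,vx], [vx,vy,vx,vx]), ([vx,vx,vy,vy], [vy,vy,vx,vx]),
            ([vx,vy,vx], [vx,vx,vy,vx])}"

definition E_ids :: "(word \<times> word) set" where
  "E_ids = {([vx,vx,vy,vy], [vy,vy,vx,vx]), ([vx,vx], [vx,vx,vx]),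
            ([vy,vx,vx], [vx,vy,vx])}"

definition F_ids :: "(word \<times> word) set" where
  "F_ids = {([vx,vy,vx], [vx,vy,vx,vx]), ([vx,vx,vy,vy], [vy,vy,vx,vx]),
            ([vx,vy,vz,vx,vy], [vy,vx,vz,vx,vy]), ([vx,vx,vy], [vx,vx,vy,vx])}"

definition "varK = var_def_by K_ids"
definition "varQ = var_def_by Q_ids"
definition "varE = var_def_by E_ids"
definition "varF = var_def_by F_ids"

end

theory Submission
  imports Defs "HOL-Library.Multiset"
begin

text \<open>
  The identities of \<open>E\<close> and of \<open>F\<close> are characterised by invariants of the two sides. Both
  compare the number of occurrences of each letter, counted up to 2; for every letter \<open>t\<close>
  occurring once, \<open>E\<close> in addition compares the sets of letters occurring after \<open>t\<close>, and \<open>F\<close>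
  the numbers of occurrences (up to 2) of each letter before \<open>t\<close>. Completeness is proved by
  rewriting both sides to a common normal form with the defining identities.

  Now let \<open>u \<approx> v\<close> hold in \<open>V\<close> but fail in \<open>E\<close> (or in \<open>F\<close>), so that it violates the invariant.
  Deleting all letters except the two witnessing the violation yields an identity
  \<open>x\<^sup>iyx\<^sup>j \<approx> x\<^sup>kyx\<^sup>l\<close> of \<open>V\<close> whose exponents still violate the invariant. The identities
  \<open>xyx \<approx> xyx\<^sup>2\<close> and \<open>x\<^sup>2y\<^sup>2 \<approx> y\<^sup>2x\<^sup>2\<close> reduce the exponents to a finite range, and a case
  analysis shows that each such identity implies \<open>x\<^sup>2y \<approx> x\<^sup>2yx\<close> (resp. \<open>xyx \<approx> x\<^sup>2yx\<close>).
\<close>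

section \<open>Equational theories and varieties\<close>

lemma subst_word_simps [simp]:
  "subst_word \<sigma> [] = []"
  "subst_word \<sigma> (x # w) = \<sigma> x @ subst_word \<sigma> w"
  "subst_word \<sigma> (u @ w) = subst_word \<sigma> u @ subst_word \<sigma> w"
  by (simp_all add: subst_word_def)

lemma eq_cl_idem: "eq_cl (eq_cl S) = eq_cl S"
proof
  show "eq_cl (eq_cl S) \<subseteq> eq_cl S"
  proof (rule subrelI)
    fix u v assume "(u, v) \<in> eq_cl (eq_cl S)"
    then show "(u, v) \<in> eq_cl S"
      by (induction rule: eq_cl.induct) (auto intro: eq_cl.intros)
  qed
qed (auto intro: eq_cl.base)

lemma eq_cl_least:
  assumes "S \<subseteq> R" and "eq_cl R = R"
  shows "eq_cl S \<subseteq> R"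
proof (rule subrelI)
  fix u v assume "(u, v) \<in> eq_cl S"
  then have "(u, v) \<in> eq_cl R"
    by (induction rule: eq_cl.induct) (use assms(1) in \<open>auto intro: eq_cl.intros\<close>)
  then show "(u, v) \<in> R" using assms(2) by simp
qed

lemma subvariety_var_def_by_iff:
  assumes "is_variety V"
  shows "subvariety V (var_def_by S) \<longleftrightarrow> S \<subseteq> V"
proof
  show "subvariety V (var_def_by S) \<Longrightarrow> S \<subseteq> V"
    unfolding subvariety_def var_def_by_def by (auto intro: eq_cl.base)
  show "S \<subseteq> V \<Longrightarrow> subvariety V (var_def_by S)"
    using assms eq_cl_least unfolding subvariety_def var_def_by_def is_variety_def by blast
qed

definition subst_list :: "word list \<Rightarrow> nat \<Rightarrow> word" where
  "subst_list ws n = (if n < length ws then ws ! n else [])"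

locale equational_theory =
  fixes R :: "(word \<times> word) set"
  assumes eq_cl_closed: "eq_cl R = R"
begin

definition eqv :: "word \<Rightarrow> word \<Rightarrow> bool" (infix "\<simeq>" 50) where
  "u \<simeq> v \<longleftrightarrow> (u, v) \<in> R"

lemma eqv_refl [simp, intro]: "u \<simeq> u"
  using eq_cl.refl[of u R] eq_cl_closed by (simp add: eqv_def)

lemma eqv_sym: "u \<simeq> v \<Longrightarrow> v \<simeq> u"
  using eq_cl.sym[of u v R] eq_cl_closed by (simp add: eqv_def)

lemma eqv_trans [trans]: "u \<simeq> v \<Longrightarrow> v \<simeq> w \<Longrightarrow> u \<simeq> w"
  using eq_cl.trans[of u v R w] eq_cl_closed by (simp add: eqv_def)

lemma eqv_context: "u \<simeq> v \<Longrightarrow> p @ u @ q \<simeq> p @ v @ q"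
  using eq_cl.ctx[of u v R p q] eq_cl_closed by (simp add: eqv_def)

lemma eqv_append_left: "u \<simeq> v \<Longrightarrow> p @ u \<simeq> p @ v"
  using eqv_context[of u v p "[]"] by simp

lemma eqv_append_right: "u \<simeq> v \<Longrightarrow> u @ q \<simeq> v @ q"
  using eqv_context[of u v "[]" q] by simp

lemma eqv_subst: "u \<simeq> v \<Longrightarrow> subst_word \<sigma> u \<simeq> subst_word \<sigma> v"
  using eq_cl.subst[of u v R \<sigma>] eq_cl_closed by (simp add: eqv_def)

lemma eqv_instance:
  "(u, v) \<in> R \<Longrightarrow> subst_word (subst_list ws) u \<simeq> subst_word (subst_list ws) v"
  by (rule eqv_subst) (simp add: eqv_def)

end

section \<open>First occurrences and capped contents\<close>

fun before_first :: "nat \<Rightarrow> word \<Rightarrow> word" where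
  "before_first t [] = []"
| "before_first t (x # w) = (if x = t then [] else x # before_first t w)"

fun after_first :: "nat \<Rightarrow> word \<Rightarrow> word" where
  "after_first t [] = []"
| "after_first t (x # w) = (if x = t then w else after_first t w)"

lemma before_first_append:
  "before_first t (u @ w) = (if t \<in> set u then before_first t u else u @ before_first t w)"
  by (induction u) auto

lemma after_first_append:
  "after_first t (u @ w) = (if t \<in> set u then after_first t u @ w else after_first t w)"
  by (induction u) auto

lemma set_after_first: "set (after_first t w) \<subseteq> set w"
  by (induction w) auto

lemma not_in_before_first: "t \<notin> set (before_first t w)"
  by (induction w) auto

lemma linear_not_in_after_first: "count_list w t = 1 \<Longrightarrow> t \<notin> set (after_first t w)"
  by (induction w) (auto simp: count_list_0_iff split: if_splits)

lemma after_first_filter: "P t \<Longrightarrow> after_first t (filter P w) = filter P (after_first t w)"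
  by (induction w) auto

lemma count_list_filter: "count_list (filter P w) a = (if P a then count_list w a else 0)"
  by (induction w) auto

lemma count_list_pos_iff: "0 < count_list w a \<longleftrightarrow> a \<in> set w"
  using count_list_0_iff[of w a] by auto

definition counts_agree_upto2 :: "word \<Rightarrow> word \<Rightarrow> bool" where
  "counts_agree_upto2 u v \<longleftrightarrow> (\<forall>a. min (count_list u a) 2 = min (count_list v a) 2)"

lemma counts_agree_upto2_sym: "counts_agree_upto2 u v \<Longrightarrow> counts_agree_upto2 v u"
  by (simp add: counts_agree_upto2_def)

lemma counts_agree_upto2_linear:
  "counts_agree_upto2 u v \<Longrightarrow> count_list u a = 1 \<Longrightarrow> count_list v a = 1"
  unfolding counts_agree_upto2_def by (metis min_def nat_le_linear numeral_le_one_iff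
      semiring_norm(69))

lemma counts_agree_upto2_repeated:
  "counts_agree_upto2 u v \<Longrightarrow> 2 \<le> count_list u a \<Longrightarrow> 2 \<le> count_list v a"
  unfolding counts_agree_upto2_def by (metis min.absorb2 min.bounded_iff order_refl)

lemma counts_agree_upto2_snoc_cancel:
  assumes "counts_agree_upto2 (u @ [c]) (v @ [c])" and "c \<notin> set u" and "c \<notin> set v"
  shows "counts_agree_upto2 u v"
  unfolding counts_agree_upto2_def
proof
  fix a
  show "min (count_list u a) 2 = min (count_list v a) 2"
  proof (cases "a = c")
    case False
    then show ?thesis using assms(1)[unfolded counts_agree_upto2_def, rule_format, of a] by simp
  qed (use assms(2,3) in \<open>simp add: count_list_0_iff\<close>)
qed

lemma counts_agree_upto2_set: "counts_agree_upto2 u v \<Longrightarrow> set u = set v"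
  unfolding counts_agree_upto2_def
  by (metis count_list_0_iff min_0L min_def subsetI subset_antisym zero_neq_numeral)

definition E_invariant :: "word \<Rightarrow> word \<Rightarrow> bool" where
  "E_invariant u v \<longleftrightarrow> counts_agree_upto2 u v \<and>
     (\<forall>a. count_list u a = 1 \<longrightarrow> set (after_first a u) = set (after_first a v))"

definition F_invariant :: "word \<Rightarrow> word \<Rightarrow> bool" where
  "F_invariant u v \<longleftrightarrow> counts_agree_upto2 u v \<and>
     (\<forall>t. count_list u t = 1 \<longrightarrow> counts_agree_upto2 (before_first t u) (before_first t v))"

section \<open>The equational theory of \<open>E\<close>\<close>

lemma E_invariant_filter:
  assumes "E_invariant u v"
  shows "E_invariant (filter P u) (filter P v)"
  unfolding E_invariant_def
proof (intro conjI allI impI)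
  show "counts_agree_upto2 (filter P u) (filter P v)"
    using assms by (simp add: E_invariant_def counts_agree_upto2_def count_list_filter)
next
  fix a assume "count_list (filter P u) a = 1"
  then have "P a" "count_list u a = 1" by (simp_all add: count_list_filter split: if_splits)
  then show "set (after_first a (filter P u)) = set (after_first a (filter P v))"
    using assms by (simp add: E_invariant_def after_first_filter)
qed

lemma E_invariant_snoc_linear:
  assumes inv: "E_invariant (u @ [c]) v" and "c \<notin> set u"
  obtains v' where "v = v' @ [c]" and "E_invariant u v'"
proof -
  have agree: "counts_agree_upto2 (u @ [c]) v"
    and after: "\<And>a. count_list (u @ [c]) a = 1 \<Longrightarrow>
      set (after_first a (u @ [c])) = set (after_first a v)"
    using inv by (auto simp: E_invariant_def)
  have "count_list (u @ [c]) c = 1" using \<open>c \<notin> set u\<close> by (simp add: count_list_0_iff)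
  then have cv: "count_list v c = 1" by (rule counts_agree_upto2_linear[OF agree])
  then obtain v1 v2 where v: "v = v1 @ c # v2" and "c \<notin> set v1"
    by (metis count_list_Suc_split_first One_nat_def)
  then have "c \<notin> set v2" using cv by (simp add: count_list_0_iff)
  have "set v2 = set (after_first c (u @ [c]))"
    using after[OF \<open>count_list (u @ [c]) c = 1\<close>] v \<open>c \<notin> set v1\<close>
    by (simp add: after_first_append)
  then have "v2 = []" using \<open>c \<notin> set u\<close> by (simp add: after_first_append)
  have "E_invariant u v1"
    unfolding E_invariant_def
  proof (intro conjI allI impI)
    show "counts_agree_upto2 u v1"
      by (rule counts_agree_upto2_snoc_cancel[of u c v1])
        (use agree v \<open>v2 = []\<close> \<open>c \<notin> set u\<close> \<open>c \<notin> set v1\<close> in simp_all)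
  next
    fix a assume a: "count_list u a = 1"
    then have "a \<in> set u" by (simp flip: count_list_pos_iff)
    then have "a \<noteq> c" using \<open>c \<notin> set u\<close> by auto
    have "a \<in> set v" using counts_agree_upto2_set[OF agree] \<open>a \<in> set u\<close> by auto
    then have "a \<in> set v1" using v \<open>v2 = []\<close> \<open>a \<noteq> c\<close> by simp
    have "set (after_first a u) \<union> {c} = set (after_first a v1) \<union> {c}"
      using after[of a] a \<open>a \<noteq> c\<close> \<open>a \<in> set u\<close> \<open>a \<in> set v1\<close> v \<open>v2 = []\<close>
      by (simp add: after_first_append)
    moreover have "c \<notin> set (after_first a u)" "c \<notin> set (after_first a v1)"
      using set_after_first \<open>c \<notin> set u\<close> \<open>c \<notin> set v1\<close> by blast+
    ultimately show "set (after_first a u) = set (after_first a v1)" by blast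
  qed
  then show thesis using that v \<open>v2 = []\<close> by simp
qed

lemma E_invariant_last_suffix_repeated:
  assumes inv: "E_invariant (u @ [c]) (v1 @ c # v2)"
    and "c \<in> set u" "c \<notin> set v2" "y \<in> set v2"
  shows "2 \<le> count_list (v1 @ c # v2) y"
proof (rule ccontr)
  assume "\<not> 2 \<le> count_list (v1 @ c # v2) y"
  moreover have "0 < count_list v2 y" using \<open>y \<in> set v2\<close> by (simp add: count_list_pos_iff)
  moreover have "y \<noteq> c" using assms(3,4) by auto
  ultimately have linear: "count_list (v1 @ c # v2) y = 1" by simp
  with \<open>y \<noteq> c\<close> \<open>0 < count_list v2 y\<close> have "count_list v1 y = 0" by simp
  then have "y \<notin> set v1" by (simp add: count_list_0_iff)
  have "counts_agree_upto2 (v1 @ c # v2) (u @ [c])"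
    using inv by (simp add: E_invariant_def counts_agree_upto2_sym)
  then have "count_list (u @ [c]) y = 1" using linear by (rule counts_agree_upto2_linear)
  then have "y \<in> set u" using \<open>y \<noteq> c\<close> by (simp flip: count_list_pos_iff)
  then have "c \<in> set (after_first y (u @ [c]))" by (simp add: after_first_append)
  moreover have "c \<notin> set (after_first y (v1 @ c # v2))"
    using \<open>y \<notin> set v1\<close> \<open>y \<noteq> c\<close> \<open>c \<notin> set v2\<close> set_after_first[of y v2]
    by (auto simp: after_first_append)
  ultimately show False
    using inv \<open>count_list (u @ [c]) y = 1\<close> by (auto simp: E_invariant_def)
qed

locale E_theory = equational_theory +
  assumes squares_commute_id: "([0,0,1,1], [1,1,0,0]) \<in> R"
    and square_cube_id: "([0,0], [0,0,0]) \<in> R"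
    and yxx_xyx_id: "([1,0,0], [0,1,0]) \<in> R"
begin

lemma squares_commute: "s @ s @ t @ t \<simeq> t @ t @ s @ s"
  using eqv_instance[OF squares_commute_id, of "[s, t]"] by (simp add: subst_list_def)

lemma square_eq_cube: "s @ s \<simeq> s @ s @ s"
  using eqv_instance[OF square_cube_id, of "[s]"] by (simp add: subst_list_def)

lemma yxx_eq_xyx: "t @ s @ s \<simeq> s @ t @ s"
  using eqv_instance[OF yxx_xyx_id, of "[s, t]"] by (simp add: subst_list_def)

lemma delete_before_square: "p @ [b, b] \<simeq> filter (\<lambda>x. x \<noteq> b) p @ [b, b]"
proof (induction p)
  case (Cons x p)
  let ?f = "filter (\<lambda>x. x \<noteq> b) p"
  have "x # p @ [b, b] \<simeq> x # ?f @ [b, b]"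
    using eqv_append_left[OF Cons.IH, of "[x]"] by simp
  also have "x # ?f @ [b, b] \<simeq> filter (\<lambda>x. x \<noteq> b) (x # p) @ [b, b]"
  proof (cases "x = b")
    case True
    have "b # ?f @ [b, b] = ([b] @ ?f @ [b]) @ [b]" by simp
    also have "\<dots> \<simeq> (?f @ [b] @ [b]) @ [b]"
      by (rule eqv_append_right, rule eqv_sym, rule yxx_eq_xyx)
    also have "\<dots> = ?f @ [b] @ [b] @ [b]" by simp
    also have "\<dots> \<simeq> ?f @ [b] @ [b]"
      by (rule eqv_append_left, rule eqv_sym, rule square_eq_cube)
    finally show ?thesis using True by simp
  qed simp
  finally show ?case by simp
qed simp

lemma snoc_repeated:
  assumes "b \<in> set p"
  shows "p @ [b] \<simeq> filter (\<lambda>x. x \<noteq> b) p @ [b, b]"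
proof -
  obtain p1 p2 where p: "p = p1 @ b # p2" and "b \<notin> set p2"
    using split_list_last[OF assms] by blast
  have "p @ [b] = p1 @ ([b] @ p2 @ [b])" using p by simp
  also have "\<dots> \<simeq> p1 @ (p2 @ [b] @ [b])"
    by (rule eqv_append_left, rule eqv_sym, rule yxx_eq_xyx)
  also have "\<dots> = (p1 @ p2) @ [b, b]" by simp
  also have "\<dots> \<simeq> filter (\<lambda>x. x \<noteq> b) (p1 @ p2) @ [b, b]" by (rule delete_before_square)
  finally show ?thesis using p by simp
qed

lemma last_occurrence_to_square:
  assumes "c \<in> set v1" and "c \<notin> set v2"
    and "\<forall>b\<in>set v2. 2 \<le> count_list (v1 @ c # v2) b"
  shows "v1 @ c # v2 \<simeq> filter (\<lambda>x. x \<noteq> c) (v1 @ v2) @ [c, c]"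
  using assms
proof (induction "length v2" arbitrary: v1 v2 rule: less_induct)
  case less
  show ?case
  proof (cases v2 rule: rev_exhaust)
    case Nil
    then show ?thesis using snoc_repeated[OF less.prems(1)] by simp
  next
    case (snoc r b)
    let ?fb = "filter (\<lambda>x. x \<noteq> b)" and ?fc = "filter (\<lambda>x. x \<noteq> c)"
    have "b \<noteq> c" using less.prems(2) snoc by auto
    have "2 \<le> count_list (v1 @ c # v2) b" using less.prems(3) snoc by auto
    then have "b \<in> set (v1 @ c # r)"
      using snoc \<open>b \<noteq> c\<close> by (auto simp flip: count_list_pos_iff)
    then have "b \<in> set (?fc (v1 @ r))" using \<open>b \<noteq> c\<close> by auto
    have IH: "?fb v1 @ c # ?fb r \<simeq> ?fc (?fb v1 @ ?fb r) @ [c, c]"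
    proof (rule less.hyps)
      show "length (?fb r) < length v2" using snoc by (simp add: le_imp_less_Suc)
      show "c \<in> set (?fb v1)" using less.prems(1) \<open>b \<noteq> c\<close> by simp
      show "c \<notin> set (?fb r)" using less.prems(2) snoc by simp
      show "\<forall>d\<in>set (?fb r). 2 \<le> count_list (?fb v1 @ c # ?fb r) d"
        using less.prems(3) snoc \<open>b \<noteq> c\<close> by (auto simp: count_list_filter)
    qed
    have "v1 @ c # v2 = (v1 @ c # r) @ [b]" using snoc by simp
    also have "\<dots> \<simeq> ?fb (v1 @ c # r) @ [b, b]" by (rule snoc_repeated) fact
    also have "\<dots> = (?fb v1 @ c # ?fb r) @ [b, b]" using \<open>b \<noteq> c\<close> by simp
    also have "\<dots> \<simeq> ?fc (?fb v1 @ ?fb r) @ [c] @ [c] @ [b] @ [b]"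
      using eqv_append_right[OF IH] by simp
    also have "\<dots> \<simeq> ?fc (?fb v1 @ ?fb r) @ [b] @ [b] @ [c] @ [c]"
      by (rule eqv_append_left, rule squares_commute)
    also have "\<dots> = ?fb (?fc (v1 @ r)) @ [b, b] @ [c, c]"
      by (simp add: conj_commute)
    also have "\<dots> \<simeq> ?fc (v1 @ r) @ [b] @ [c, c]"
      using eqv_append_right[OF snoc_repeated[OF \<open>b \<in> set (?fc (v1 @ r))\<close>], of "[c, c]"]
      by (simp add: eqv_sym)
    also have "\<dots> = ?fc (v1 @ v2) @ [c, c]" using snoc \<open>b \<noteq> c\<close> by simp
    finally show ?thesis .
  qed
qed

lemma E_invariant_imp_eqv: "E_invariant u v \<Longrightarrow> u \<simeq> v"
proof (induction "length u" arbitrary: u v rule: less_induct)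
  case less
  have agree: "counts_agree_upto2 u v" using less.prems by (simp add: E_invariant_def)
  show ?case
  proof (cases u rule: rev_exhaust)
    case Nil
    then show ?thesis using counts_agree_upto2_set[OF agree] by simp
  next
    case (snoc u1 c)
    show ?thesis
    proof (cases "c \<in> set u1")
      case False
      then obtain v1 where "v = v1 @ [c]" "E_invariant u1 v1"
        using E_invariant_snoc_linear less.prems snoc by metis
      moreover have "length u1 < length u" using snoc by simp
      ultimately show ?thesis using less.hyps snoc eqv_append_right by blast
    next
      case True
      let ?fc = "filter (\<lambda>x. x \<noteq> c)"
      have "2 \<le> count_list u c"
        using True snoc by (simp add: Suc_le_eq flip: count_list_pos_iff)
      then have "2 \<le> count_list v c" by (rule counts_agree_upto2_repeated[OF agree])
      then have "c \<in> set v" by (simp flip: count_list_pos_iff)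
      then obtain v1 v2 where v: "v = v1 @ c # v2" and "c \<notin> set v2"
        using split_list_last by metis
      with \<open>2 \<le> count_list v c\<close> have "c \<in> set v1" by (simp flip: count_list_pos_iff)
      have "u \<simeq> ?fc u @ [c, c]" using snoc_repeated[OF True] snoc by simp
      also have "?fc u \<simeq> ?fc v"
      proof (rule less.hyps)
        show "length (?fc u) < length u" using snoc by (simp add: le_imp_less_Suc)
        show "E_invariant (?fc u) (?fc v)" using less.prems by (rule E_invariant_filter)
      qed
      then have "?fc u @ [c, c] \<simeq> ?fc v @ [c, c]" by (rule eqv_append_right)
      also have "?fc v @ [c, c] \<simeq> v"
        using last_occurrence_to_square[OF \<open>c \<in> set v1\<close> \<open>c \<notin> set v2\<close>]
          E_invariant_last_suffix_repeated[OF _ True \<open>c \<notin> set v2\<close>] less.prems snoc v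
        by (auto intro: eqv_sym)
      finally show ?thesis .
    qed
  qed
qed

end

section \<open>Identities in two letters\<close>

lemma subst_word_single: "subst_word (\<lambda>n. if n = a then [x] else []) w = replicate (count_list w a) x"
  by (induction w) auto

definition project2 :: "nat \<Rightarrow> nat \<Rightarrow> nat \<Rightarrow> word" where
  "project2 b a n = (if n = b then [0] else if n = a then [1] else [])"

lemma subst_word_project2_absent:
  "a \<notin> set w \<Longrightarrow> subst_word (project2 b a) w = replicate (count_list w b) 0"
  by (induction w) (auto simp: project2_def)

lemma subst_word_project2:
  assumes "count_list w a = 1" and "a \<noteq> b"
  shows "subst_word (project2 b a) w = replicate (count_list (before_first a w) b) 0 @ [1]
      @ replicate (count_list (after_first a w) b) 0"
    and "count_list (before_first a w) b + count_list (after_first a w) b = count_list w b"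
proof -
  obtain w1 w2 where w: "w = w1 @ a # w2" "a \<notin> set w1" "count_list w2 a = 0"
    using count_list_Suc_split_first[of w a 0] assms(1) by auto
  then have "a \<notin> set w2" by (simp add: count_list_0_iff)
  with w assms(2) show "subst_word (project2 b a) w = replicate (count_list (before_first a w) b) 0
      @ [1] @ replicate (count_list (after_first a w) b) 0"
    and "count_list (before_first a w) b + count_list (after_first a w) b = count_list w b"
    by (simp_all add: subst_word_project2_absent before_first_append after_first_append
        project2_def)
qed

locale V_theory = equational_theory +
  assumes xyx_id: "([0,1,0], [0,1,0,0]) \<in> R"
    and squares_commute_id: "([0,0,1,1], [1,1,0,0]) \<in> R"
begin

abbreviation K_law :: bool where "K_law \<equiv> [0,0,1] \<simeq> [0,0,1,0]"

abbreviation Q_law :: bool where "Q_law \<equiv> [0,1,0] \<simeq> [0,0,1,0]"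

lemma xtx_eq_xtxx: "x # t @ [x] \<simeq> x # t @ [x, x]"
  using eqv_instance[OF xyx_id, of "[[x], t]"] by (simp add: subst_list_def)

lemma square_eq_cube: "[x, x] \<simeq> [x, x, x]"
  using xtx_eq_xtxx[of x "[]"] by simp

lemma squares_commute: "s @ s @ t @ t \<simeq> t @ t @ s @ s"
  using eqv_instance[OF squares_commute_id, of "[s, t]"] by (simp add: subst_list_def)

lemma power_reduce: "2 \<le> k \<Longrightarrow> replicate k x @ w \<simeq> [x, x] @ w"
proof (induction k rule: dec_induct)
  case base
  then show ?case by (simp add: numeral_2_eq_2)
next
  case (step n)
  have "replicate (Suc n) x @ w = [x] @ replicate n x @ w" by simp
  also have "\<dots> \<simeq> [x] @ [x, x] @ w" by (rule eqv_append_left, rule step.IH)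
  also have "\<dots> \<simeq> [x, x] @ w" using eqv_append_right[OF eqv_sym[OF square_eq_cube]] by simp
  finally show ?case .
qed

lemma replicate_reduce: "replicate m x \<simeq> replicate (min m 2) x"
  using power_reduce[of m x "[]"] by (cases "2 \<le> m") (simp_all add: numeral_2_eq_2)

lemma tail_reduce: "1 \<le> l \<Longrightarrow> x # t @ replicate l x \<simeq> x # t @ [x]"
proof (induction l rule: dec_induct)
  case (step n)
  have "x # t @ replicate (Suc n) x = (x # t @ replicate n x) @ [x]"
    by (simp flip: replicate_append_same)
  also have "\<dots> \<simeq> (x # t @ [x]) @ [x]" by (rule eqv_append_right, rule step.IH)
  also have "\<dots> \<simeq> x # t @ [x]" using eqv_sym[OF xtx_eq_xtxx] by simp
  finally show ?case .
qed simp

lemma two_letter_reduce: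
  "replicate k x @ [y] @ replicate l x
     \<simeq> replicate (min k 2) x @ [y] @ replicate (if k = 0 then min l 2 else min l 1) x"
proof -
  have "replicate k x @ [y] @ replicate l x
      \<simeq> replicate k x @ [y] @ replicate (if k = 0 then min l 2 else min l 1) x"
  proof (cases "k = 0 \<or> l = 0")
    case True
    then show ?thesis using eqv_append_left[OF replicate_reduce, of "[y]" l x] by auto
  next
    case False
    then have "x # (replicate (k - 1) x @ [y]) @ replicate l x \<simeq> x # (replicate (k - 1) x @ [y]) @ [x]"
      by (intro tail_reduce) simp
    moreover have "replicate k x = x # replicate (k - 1) x" using False by (cases k) auto
    ultimately show ?thesis using False by simp
  qed
  also have "\<dots> \<simeq> replicate (min k 2) x @ [y] @ replicate (if k = 0 then min l 2 else min l 1) x"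
    by (rule eqv_append_right, rule replicate_reduce)
  finally show ?thesis .
qed

lemma trivial_of_unit:
  assumes "[0] \<simeq> []"
  shows "u \<simeq> v"
proof -
  have letter: "[x] \<simeq> []" for x using eqv_subst[OF assms, of "\<lambda>n. [x]"] by simp
  have "w \<simeq> []" for w
  proof (induction w)
    case (Cons x w)
    have "x # w = [x] @ w" by simp
    also have "\<dots> \<simeq> [] @ w" by (rule eqv_append_right, rule letter)
    finally show ?case using Cons by (simp add: eqv_trans)
  qed simp
  then show ?thesis using eqv_sym eqv_trans by blast
qed

lemma K_Q_of_commutative:
  assumes "[1,0] \<simeq> [0,1]"
  shows "K_law" and "Q_law"
proof -
  have "[0,0,1,0] = [0,0] @ [1,0]" by simp
  also have "\<dots> \<simeq> [0,0] @ [0,1]" by (rule eqv_append_left, rule assms)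
  also have "\<dots> = [0,0,0] @ [1]" by simp
  also have "\<dots> \<simeq> [0,0,1]" using eqv_append_right[OF eqv_sym[OF square_eq_cube]] by simp
  finally show K: "K_law" by (rule eqv_sym)
  have "[0,1,0] = [0] @ [1,0]" by simp
  also have "\<dots> \<simeq> [0] @ [0,1]" by (rule eqv_append_left, rule assms)
  also have "\<dots> \<simeq> [0,0,1,0]" using K by simp
  finally show "Q_law" .
qed

lemma K_Q_of_idempotent:
  assumes "[0] \<simeq> [0,0]"
  shows "K_law" and "Q_law"
proof -
  have idem: "[x] \<simeq> [x, x]" for x using eqv_subst[OF assms, of "\<lambda>n. [x]"] by simp
  have "[1,0] = [1] @ [0]" by simp
  also have "\<dots> \<simeq> [1,1] @ [0,0]" using eqv_append_right[OF idem] eqv_append_left[OF idem]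
    by (meson eqv_trans)
  also have "\<dots> \<simeq> [0,0] @ [1,1]" using squares_commute[of "[1]" "[0]"] by simp
  also have "\<dots> \<simeq> [0] @ [1]" using eqv_append_right[OF idem] eqv_append_left[OF idem]
    by (meson eqv_sym eqv_trans)
  finally have "[1,0] \<simeq> [0,1]" by simp
  then show "K_law" and "Q_law" by (rule K_Q_of_commutative)+
qed

lemma K_Q_of_power_lt:
  assumes "replicate m 0 \<simeq> replicate k 0" and "m < k" and "k \<le> 2"
  shows "K_law" and "Q_law"
proof -
  consider "m = 0" "k = 1" | "m = 0" "k = 2" | "m = 1" "k = 2" using assms(2,3) by linarith
  then have "[0] \<simeq> [] \<or> [0] \<simeq> [0,0]"
  proof cases
    case 1
    then show ?thesis using assms(1) by (simp add: eqv_sym)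
  next
    case 2
    then have unit_sq: "[] \<simeq> [0,0]" using assms(1) by (simp add: numeral_2_eq_2)
    have "[0] = [0] @ []" by simp
    also have "\<dots> \<simeq> [0] @ [0,0]" by (rule eqv_append_left, rule unit_sq)
    also have "\<dots> \<simeq> [0,0]" using eqv_sym[OF square_eq_cube] by simp
    also have "\<dots> \<simeq> []" by (rule eqv_sym, rule unit_sq)
    finally show ?thesis ..
  next
    case 3
    then show ?thesis using assms(1) by (simp add: numeral_2_eq_2)
  qed
  then show "K_law" and "Q_law" using trivial_of_unit K_Q_of_idempotent by blast+
qed

lemma K_Q_of_power_mismatch:
  assumes "replicate m 0 \<simeq> replicate k 0" and "min m 2 \<noteq> min k 2"
  shows "K_law" and "Q_law"
proof -
  have "replicate (min m 2) 0 \<simeq> replicate (min k 2) 0"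
    using assms(1) replicate_reduce eqv_sym eqv_trans by metis
  then have "replicate (min m 2) 0 \<simeq> replicate (min k 2) 0 \<and> min m 2 < min k 2 \<or>
      replicate (min k 2) 0 \<simeq> replicate (min m 2) 0 \<and> min k 2 < min m 2"
    using assms(2) eqv_sym by (meson linorder_neqE_nat)
  then show "K_law" and "Q_law" using K_Q_of_power_lt[of _ _] by fastforce+
qed

lemma K_Q_of_x2y_eq_xyx:
  assumes "[0,0,1] \<simeq> [0,1,0]"
  shows "K_law" and "Q_law"
proof -
  have "[0,0,1,0] = [0] @ [0,1,0]" by simp
  also have "\<dots> \<simeq> [0] @ [0,0,1]" by (rule eqv_append_left, rule eqv_sym, rule assms)
  also have "\<dots> = [0,0,0] @ [1]" by simp
  also have "\<dots> \<simeq> [0,0,1]" using eqv_append_right[OF eqv_sym[OF square_eq_cube]] by simp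
  finally show K: "K_law" by (rule eqv_sym)
  show "Q_law" using eqv_trans[OF eqv_sym[OF assms] K] .
qed

lemma K_Q_of_x2y_eq_yx2:
  assumes "[0,0,1] \<simeq> [1,0,0]"
  shows "K_law" and "Q_law"
proof -
  have "[0,0,1,0] = [0,0,1] @ [0]" by simp
  also have "\<dots> \<simeq> [1,0,0] @ [0]" by (rule eqv_append_right, rule assms)
  also have "\<dots> = [1] @ [0,0,0]" by simp
  also have "\<dots> \<simeq> [1] @ [0,0]" by (rule eqv_append_left, rule eqv_sym, rule square_eq_cube)
  also have "\<dots> \<simeq> [0,0,1]" using eqv_sym[OF assms] by simp
  finally show K: "K_law" by (rule eqv_sym)
  have "[0,1,0] \<simeq> [0] @ [1,0,0]" using xtx_eq_xtxx[of 0 "[1]"] by simp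
  also have "\<dots> \<simeq> [0] @ [0,0,1]" by (rule eqv_append_left, rule eqv_sym, rule assms)
  also have "\<dots> = [0,0,0] @ [1]" by simp
  also have "\<dots> \<simeq> [0,0,1]" using eqv_append_right[OF eqv_sym[OF square_eq_cube]] by simp
  finally show "Q_law" using K by (rule eqv_trans)
qed

lemma Q_of_yx2_eq_xyx:
  assumes "[1,0,0] \<simeq> [0,1,0]"
  shows "Q_law"
proof -
  have "[0,1,0] \<simeq> [0] @ [1,0,0]" using xtx_eq_xtxx[of 0 "[1]"] by simp
  also have "\<dots> \<simeq> [0] @ [0,1,0]" by (rule eqv_append_left, rule assms)
  finally show ?thesis by simp
qed

lemma Q_of_yx2_eq_x2yx:
  assumes "[1,0,0] \<simeq> [0,0,1,0]"
  shows "Q_law"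
proof -
  have "[0,1,0] \<simeq> [0] @ [1,0,0]" using xtx_eq_xtxx[of 0 "[1]"] by simp
  also have "\<dots> \<simeq> [0] @ [0,0,1,0]" by (rule eqv_append_left, rule assms)
  also have "\<dots> = [0,0,0] @ [1,0]" by simp
  also have "\<dots> \<simeq> [0,0] @ [1,0]" by (rule eqv_append_right, rule eqv_sym, rule square_eq_cube)
  finally show ?thesis by simp
qed

lemma K_law_of_two_letter:
  assumes eq: "replicate i 0 @ [1] \<simeq> replicate k 0 @ [1] @ replicate l 0"
    and "1 \<le> i" and "1 \<le> l" and "min i 2 = min (k + l) 2"
  shows "K_law"
proof -
  have reduced: "replicate (min i 2) 0 @ [1]
      \<simeq> replicate (min k 2) 0 @ [1] @ replicate (if k = 0 then min l 2 else min l 1) 0"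
    using eqv_trans[OF eqv_trans[OF eqv_sym[OF eqv_append_right[OF replicate_reduce]] eq]
        two_letter_reduce[of k 0 1 l]] .
  have "i = 1 \<and> k = 0 \<and> l = 1 \<or> 2 \<le> i \<and> k = 0 \<and> 2 \<le> l \<or> 2 \<le> i \<and> k = 1
      \<or> 2 \<le> i \<and> 2 \<le> k"
    using assms(2-4) by (cases "i = 1") (auto simp: min_def split: if_splits)
  then show ?thesis
  proof (elim disjE conjE)
    assume "i = 1" "k = 0" "l = 1"
    with reduced have "[0,1] \<simeq> [1,0]" by simp
    then show ?thesis using K_Q_of_commutative(1)[OF eqv_sym] by blast
  next
    assume "2 \<le> i" "k = 0" "2 \<le> l"
    with reduced show ?thesis using K_Q_of_x2y_eq_yx2 by (simp add: numeral_2_eq_2)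
  next
    assume "2 \<le> i" "k = 1"
    with reduced show ?thesis using K_Q_of_x2y_eq_xyx assms(3) by (simp add: numeral_2_eq_2)
  next
    assume "2 \<le> i" "2 \<le> k"
    with reduced show ?thesis using assms(3) by (simp add: numeral_2_eq_2)
  qed
qed

lemma Q_law_of_two_letter:
  assumes eq: "replicate i 0 @ [1] @ replicate j 0 \<simeq> replicate k 0 @ [1] @ replicate l 0"
    and "min (i + j) 2 = min (k + l) 2" and "min i 2 < min k 2"
  shows "Q_law"
proof -
  have reduced: "replicate (min i 2) 0 @ [1] @ replicate (if i = 0 then min j 2 else min j 1) 0
      \<simeq> replicate (min k 2) 0 @ [1] @ replicate (if k = 0 then min l 2 else min l 1) 0"
    using eqv_trans[OF eqv_trans[OF eqv_sym[OF two_letter_reduce[of i 0 1 j]] eq]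
        two_letter_reduce[of k 0 1 l]] .
  have "i = 0 \<and> k = 1 \<and> l = 0 \<and> j = 1 \<or> i = 0 \<and> k = 1 \<and> 1 \<le> l \<and> 2 \<le> j
    \<or> i = 0 \<and> 2 \<le> k \<and> l = 0 \<and> 2 \<le> j \<or> i = 0 \<and> 2 \<le> k \<and> 1 \<le> l \<and> 2 \<le> j
    \<or> i = 1 \<and> 2 \<le> k \<and> l = 0 \<and> 1 \<le> j \<or> i = 1 \<and> 2 \<le> k \<and> 1 \<le> l \<and> 1 \<le> j"
    using assms(2,3)
    by (cases "i = 0"; cases "k = 1"; cases "l = 0") (auto simp: min_def split: if_splits)
  then show ?thesis
  proof (elim disjE conjE)
    assume "i = 0" "k = 1" "l = 0" "j = 1"
    with reduced show ?thesis using K_Q_of_commutative by simp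
  next
    assume "i = 0" "k = 1" "1 \<le> l" "2 \<le> j"
    with reduced show ?thesis using Q_of_yx2_eq_xyx by (simp add: numeral_2_eq_2)
  next
    assume "i = 0" "2 \<le> k" "l = 0" "2 \<le> j"
    with reduced have "[1,0,0] \<simeq> [0,0,1]" by (simp add: numeral_2_eq_2)
    then show ?thesis using K_Q_of_x2y_eq_yx2(2)[OF eqv_sym] by blast
  next
    assume "i = 0" "2 \<le> k" "1 \<le> l" "2 \<le> j"
    with reduced show ?thesis using Q_of_yx2_eq_x2yx by (simp add: numeral_2_eq_2)
  next
    assume "i = 1" "2 \<le> k" "l = 0" "1 \<le> j"
    with reduced have "[0,1,0] \<simeq> [0,0,1]" by (simp add: numeral_2_eq_2)
    then show ?thesis using K_Q_of_x2y_eq_xyx(2)[OF eqv_sym] by blast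
  next
    assume "i = 1" "2 \<le> k" "1 \<le> l" "1 \<le> j"
    with reduced show ?thesis by (simp add: numeral_2_eq_2)
  qed
qed

lemma K_Q_of_counts_mismatch:
  assumes "u \<simeq> v" and "\<not> counts_agree_upto2 u v"
  shows "K_law" and "Q_law"
proof -
  obtain a where "min (count_list u a) 2 \<noteq> min (count_list v a) 2"
    using assms(2) by (auto simp: counts_agree_upto2_def)
  moreover have "replicate (count_list u a) 0 \<simeq> replicate (count_list v a) 0"
    using eqv_subst[OF assms(1), of "\<lambda>n. if n = a then [0] else []"]
    by (simp add: subst_word_single)
  ultimately show "K_law" and "Q_law" using K_Q_of_power_mismatch by blast+
qed

lemma K_law_of_after_mismatch:
  assumes "w1 \<simeq> w2" and agree: "counts_agree_upto2 w1 w2" and "count_list w1 a = 1"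
    and "b \<notin> set (after_first a w1)" and "b \<in> set (after_first a w2)"
  shows "K_law"
proof -
  have "count_list w2 a = 1" using counts_agree_upto2_linear agree assms(3) .
  then have "a \<noteq> b" using assms(5) linear_not_in_after_first by blast
  note w1 = subst_word_project2[OF assms(3) \<open>a \<noteq> b\<close>]
    and w2 = subst_word_project2[OF \<open>count_list w2 a = 1\<close> \<open>a \<noteq> b\<close>]
  have "count_list (after_first a w1) b = 0" using assms(4) by (simp add: count_list_0_iff)
  then have "replicate (count_list (before_first a w1) b) 0 @ [1]
      \<simeq> replicate (count_list (before_first a w2) b) 0 @ [1]
        @ replicate (count_list (after_first a w2) b) 0"
    using eqv_subst[OF assms(1), of "project2 b a"] w1(1) w2(1) by simp
  then show "K_law"
  proof (rule K_law_of_two_letter)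
    have "b \<in> set w1"
      using counts_agree_upto2_set[OF agree] set_after_first assms(5) by blast
    then show "1 \<le> count_list (before_first a w1) b"
      using w1(2) \<open>count_list (after_first a w1) b = 0\<close>
      by (simp add: Suc_le_eq flip: count_list_pos_iff)
    show "1 \<le> count_list (after_first a w2) b"
      using assms(5) by (simp add: Suc_le_eq flip: count_list_pos_iff)
    show "min (count_list (before_first a w1) b) 2
        = min (count_list (before_first a w2) b + count_list (after_first a w2) b) 2"
      using agree w1(2) w2(2) \<open>count_list (after_first a w1) b = 0\<close>
      by (simp add: counts_agree_upto2_def)
  qed
qed

lemma K_law_of_not_E_invariant:
  assumes "u \<simeq> v" and "\<not> E_invariant u v"
  shows "K_law"
proof (cases "counts_agree_upto2 u v")
  case False
  then show ?thesis using K_Q_of_counts_mismatch assms(1) by blast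
next
  case agree: True
  with assms(2) obtain a where a: "count_list u a = 1"
    and "set (after_first a u) \<noteq> set (after_first a v)"
    by (auto simp: E_invariant_def)
  then obtain b where "b \<in> set (after_first a u) \<and> b \<notin> set (after_first a v)
      \<or> b \<notin> set (after_first a u) \<and> b \<in> set (after_first a v)"
    by blast
  then show ?thesis
  proof (elim disjE conjE)
    assume "b \<in> set (after_first a u)" "b \<notin> set (after_first a v)"
    then show ?thesis
      using K_law_of_after_mismatch[OF eqv_sym[OF assms(1)] counts_agree_upto2_sym[OF agree]
          counts_agree_upto2_linear[OF agree a]] by blast
  next
    assume "b \<notin> set (after_first a u)" "b \<in> set (after_first a v)"
    then show ?thesis using K_law_of_after_mismatch[OF assms(1) agree a] by blast
  qed
qed

lemma Q_law_of_before_mismatch: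
  assumes "w1 \<simeq> w2" and agree: "counts_agree_upto2 w1 w2" and "count_list w1 t = 1"
    and lt: "min (count_list (before_first t w1) a) 2 < min (count_list (before_first t w2) a) 2"
  shows "Q_law"
proof -
  have "count_list w2 t = 1" using counts_agree_upto2_linear agree assms(3) .
  have "t \<noteq> a"
    using lt not_in_before_first[of t w2] by (auto simp: count_list_0_iff)
  note w1 = subst_word_project2[OF assms(3) \<open>t \<noteq> a\<close>]
    and w2 = subst_word_project2[OF \<open>count_list w2 t = 1\<close> \<open>t \<noteq> a\<close>]
  have "replicate (count_list (before_first t w1) a) 0 @ [1]
        @ replicate (count_list (after_first t w1) a) 0
      \<simeq> replicate (count_list (before_first t w2) a) 0 @ [1]
        @ replicate (count_list (after_first t w2) a) 0"
    using eqv_subst[OF assms(1), of "project2 a t"] w1(1) w2(1) by simp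
  then show "Q_law"
    by (rule Q_law_of_two_letter)
      (use w1(2) w2(2) agree lt in \<open>simp_all add: counts_agree_upto2_def\<close>)
qed

lemma Q_law_of_not_F_invariant:
  assumes "u \<simeq> v" and "\<not> F_invariant u v"
  shows "Q_law"
proof (cases "counts_agree_upto2 u v")
  case False
  then show ?thesis using K_Q_of_counts_mismatch assms(1) by blast
next
  case agree: True
  with assms(2) obtain t a where t: "count_list u t = 1"
    and "min (count_list (before_first t u) a) 2 \<noteq> min (count_list (before_first t v) a) 2"
    by (auto simp: F_invariant_def counts_agree_upto2_def)
  then consider "min (count_list (before_first t u) a) 2 < min (count_list (before_first t v) a) 2"
    | "min (count_list (before_first t v) a) 2 < min (count_list (before_first t u) a) 2"
    by linarith
  then show ?thesis
  proof cases
    case 1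
    then show ?thesis by (rule Q_law_of_before_mismatch[OF assms(1) agree t])
  next
    case 2
    then show ?thesis
      by (rule Q_law_of_before_mismatch[OF eqv_sym[OF assms(1)] counts_agree_upto2_sym[OF agree]
            counts_agree_upto2_linear[OF agree t]])
  qed
qed

end

section \<open>The equational theory of \<open>F\<close>\<close>

fun trim2 :: "word \<Rightarrow> word \<Rightarrow> word" where
  "trim2 s [] = []"
| "trim2 s (x # w) = (if 2 \<le> count_list s x then trim2 s w else x # trim2 (s @ [x]) w)"

lemma count_list_trim2: "count_list (trim2 s w) a = min (count_list w a) (2 - count_list s a)"
  by (induction s w rule: trim2.induct) auto

lemma before_first_trim2:
  "count_list s t < 2 \<Longrightarrow> before_first t (trim2 s w) = trim2 s (before_first t w)"
  by (induction s w rule: trim2.induct) auto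

locale F_theory = V_theory +
  assumes swap_id: "([0,1,2,0,1], [1,0,2,0,1]) \<in> R"
    and x2y_id: "([0,0,1], [0,0,1,0]) \<in> R"
begin

lemma swap_before_xy: "[x, y] @ w @ [x, y] \<simeq> [y, x] @ w @ [x, y]"
  using eqv_instance[OF swap_id, of "[[x], [y], w]"] by (simp add: subst_list_def)

lemma xxt_eq_xxtx: "x # x # t \<simeq> x # x # t @ [x]"
  using eqv_instance[OF x2y_id, of "[[x], t]"] by (simp add: subst_list_def)

lemma square_repeated:
  assumes "x \<in> set p"
  shows "p @ x # q \<simeq> p @ x # x # q"
proof -
  obtain p1 p2 where "p = p1 @ x # p2" using assms by (meson split_list)
  then show ?thesis using eqv_context[OF xtx_eq_xtxx[of x p2], of p1 q] by simp
qed

lemma insert_repeated: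
  assumes "x \<in> set p"
  shows "p @ x # r @ q \<simeq> p @ x # r @ x # q"
proof -
  have "p @ x # r @ q \<simeq> p @ x # x # r @ q" by (rule square_repeated[OF assms])
  also have "\<dots> \<simeq> p @ x # x # r @ x # q"
    using eqv_context[OF xxt_eq_xxtx[of x r], of p q] by simp
  also have "\<dots> \<simeq> p @ x # r @ x # q" by (rule eqv_sym, rule square_repeated[OF assms])
  finally show ?thesis .
qed

lemma delete_third:
  assumes "2 \<le> count_list p x"
  shows "p @ x # q \<simeq> p @ q"
proof -
  have "x \<in> set p" using assms by (simp flip: count_list_pos_iff)
  then obtain p1 r where p: "p = p1 @ x # r" and "x \<notin> set r" by (meson split_list_last)
  then have "count_list r x = 0" by (simp add: count_list_0_iff)
  then have "x \<in> set p1" using assms p by (simp flip: count_list_pos_iff)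
  from eqv_sym[OF insert_repeated[OF this, of r q]] show ?thesis using p by simp
qed

lemma append_repeated: "2 \<le> count_list w x \<Longrightarrow> w @ [x] \<simeq> w"
  using delete_third[of w x "[]"] by simp

lemma append_two_repeated:
  assumes "2 \<le> count_list w x" and "2 \<le> count_list w y"
  shows "w @ [x, y] \<simeq> w"
proof -
  have "(w @ [x]) @ [y] \<simeq> w @ [x]" by (rule append_repeated) (use assms(2) in simp)
  also have "\<dots> \<simeq> w" by (rule append_repeated[OF assms(1)])
  finally show ?thesis by simp
qed

lemma commute_repeated_after:
  assumes "x \<in> set q" and "y \<in> set q"
  shows "p @ x # y # q \<simeq> p @ y # x # q"
proof -
  have "p @ x # y # q \<simeq> (p @ x # y # q) @ [x, y]"
    by (rule eqv_sym, rule append_two_repeated)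
      (use assms in \<open>simp_all add: Suc_le_eq flip: count_list_pos_iff\<close>)
  also have "\<dots> \<simeq> p @ y # x # q @ [x, y]"
    using eqv_append_left[OF swap_before_xy[of x y q], of p] by simp
  also have "\<dots> = (p @ y # x # q) @ [x, y]" by simp
  also have "\<dots> \<simeq> p @ y # x # q"
    by (rule append_two_repeated)
      (use assms in \<open>simp_all add: Suc_le_eq flip: count_list_pos_iff\<close>)
  finally show ?thesis .
qed

lemma commute_repeated_before:
  assumes "x \<in> set p" and "y \<in> set p"
  shows "p @ x # y # q \<simeq> p @ y # x # q"
proof -
  have "p @ x # y # q \<simeq> p @ x # x # y # q" by (rule square_repeated[OF assms(1)])
  also have "\<dots> = (p @ [x, x]) @ y # q" by simp
  also have "\<dots> \<simeq> (p @ [x, x]) @ y # y # q" by (rule square_repeated) (use assms in simp)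
  also have "\<dots> = p @ ([x] @ [x] @ [y] @ [y]) @ q" by simp
  also have "\<dots> \<simeq> p @ ([y] @ [y] @ [x] @ [x]) @ q" by (rule eqv_context, rule squares_commute)
  also have "\<dots> = (p @ [y, y]) @ x # x # q" by simp
  also have "\<dots> \<simeq> (p @ [y, y]) @ x # q" by (rule eqv_sym, rule square_repeated) (use assms in simp)
  also have "\<dots> = p @ y # y # x # q" by simp
  also have "\<dots> \<simeq> p @ y # x # q" by (rule eqv_sym, rule square_repeated[OF assms(2)])
  finally show ?thesis .
qed

lemma commute_repeated_around:
  assumes "x \<in> set p" and "y \<in> set q"
  shows "p @ x # y # q \<simeq> p @ y # x # q"
proof -
  have twice: "2 \<le> count_list (p @ x # x # y # q) x" "2 \<le> count_list (p @ x # x # y # q) y"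
    "2 \<le> count_list (p @ x # y # x # q) x" "2 \<le> count_list (p @ x # y # x # q) y"
    using assms by (simp_all add: Suc_le_eq flip: count_list_pos_iff)
  have "p @ x # y # q \<simeq> p @ x # x # y # q" by (rule square_repeated[OF assms(1)])
  also have "\<dots> \<simeq> (p @ x # x # y # q) @ [y, x]"
    by (rule eqv_sym, rule append_two_repeated) (use twice in simp_all)
  also have "\<dots> = (p @ [x]) @ ([x, y] @ q @ [y, x])" by simp
  also have "\<dots> \<simeq> (p @ [x]) @ ([y, x] @ q @ [y, x])"
    by (rule eqv_append_left, rule eqv_sym, rule swap_before_xy)
  also have "\<dots> = (p @ x # y # x # q) @ [y, x]" by simp
  also have "\<dots> \<simeq> p @ x # y # x # q" by (rule append_two_repeated) (use twice in simp_all)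
  also have "\<dots> \<simeq> p @ y # x # x # q" by (rule commute_repeated_after) (use assms in simp_all)
  also have "\<dots> = (p @ [y]) @ x # x # q" by simp
  also have "\<dots> \<simeq> (p @ [y]) @ x # q" by (rule eqv_sym, rule square_repeated) (use assms in simp)
  finally show ?thesis by simp
qed

lemma commute_repeated:
  assumes "x \<in> set (p @ q)" and "y \<in> set (p @ q)"
  shows "p @ x # y # q \<simeq> p @ y # x # q"
proof -
  consider "x \<in> set q" "y \<in> set q" | "x \<in> set p" "y \<in> set p" | "x \<in> set p" "y \<in> set q"
    | "x \<in> set q" "y \<in> set p"
    using assms by auto
  then show ?thesis
  proof cases
    case 1
    then show ?thesis by (rule commute_repeated_after)
  next
    case 2
    then show ?thesis by (rule commute_repeated_before)
  next
    case 3
    then show ?thesis by (rule commute_repeated_around)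
  next
    case 4
    then show ?thesis using eqv_sym[OF commute_repeated_around[of y p x q]] by blast
  qed
qed

lemma move_across_repeated:
  assumes "x \<in> set (p @ q)" and "\<forall>y\<in>set s. 2 \<le> count_list (p @ s @ q) y"
  shows "p @ s @ x # q \<simeq> p @ x # s @ q"
  using assms
proof (induction s arbitrary: q rule: rev_induct)
  case (snoc y s)
  have "y \<in> set (p @ s @ q)"
    using snoc.prems(2) by (simp add: Suc_le_eq flip: count_list_pos_iff)
  have "p @ (s @ [y]) @ x # q = (p @ s) @ y # x # q" by simp
  also have "\<dots> \<simeq> (p @ s) @ x # y # q"
    by (rule commute_repeated) (use snoc.prems(1) \<open>y \<in> set (p @ s @ q)\<close> in auto)
  also have "\<dots> = p @ s @ x # (y # q)" by simp
  also have "\<dots> \<simeq> p @ x # s @ (y # q)"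
    by (rule snoc.IH) (use snoc.prems in auto)
  finally show ?case by simp
qed simp

lemma permute_repeated:
  assumes "mset s = mset s'" and "\<forall>x\<in>set s. 2 \<le> count_list (p @ s @ q) x"
  shows "p @ s @ q \<simeq> p @ s' @ q"
  using assms
proof (induction s' arbitrary: s p)
  case (Cons x s')
  have "x \<in> set s" using Cons.prems(1) by (metis list.set_intros(1) set_mset_mset)
  then obtain sa sb where s: "s = sa @ x # sb" and "x \<notin> set sa" by (meson split_list_first)
  have "2 \<le> count_list (p @ s @ q) x" using Cons.prems(2) \<open>x \<in> set s\<close> by blast
  moreover have "count_list sa x = 0" using \<open>x \<notin> set sa\<close> by (simp add: count_list_0_iff)
  ultimately have "x \<in> set (p @ sb @ q)" using s by (simp add: Suc_le_eq flip: count_list_pos_iff)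
  have counts: "count_list (p @ sa @ sb @ q) y = count_list (p @ s @ q) y" if "y \<noteq> x" for y
    using s that by simp
  have "p @ s @ q = p @ sa @ x # (sb @ q)" using s by simp
  also have "\<dots> \<simeq> p @ x # sa @ (sb @ q)"
  proof (rule move_across_repeated)
    show "x \<in> set (p @ sb @ q)" by fact
    show "\<forall>y\<in>set sa. 2 \<le> count_list (p @ sa @ sb @ q) y"
      using Cons.prems(2) counts s \<open>x \<notin> set sa\<close> by fastforce
  qed
  also have "\<dots> = (p @ [x]) @ (sa @ sb) @ q" by simp
  also have "\<dots> \<simeq> (p @ [x]) @ s' @ q"
  proof (rule Cons.IH)
    show "mset (sa @ sb) = mset s'" using Cons.prems(1) s by simp
    have "count_list ((p @ [x]) @ (sa @ sb) @ q) y = count_list (p @ s @ q) y" for y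
      using s by simp
    then show "\<forall>y\<in>set (sa @ sb). 2 \<le> count_list ((p @ [x]) @ (sa @ sb) @ q) y"
      using Cons.prems(2) s by auto
  qed
  finally show ?case by simp
qed simp

lemma trim2_eqv: "p @ w \<simeq> p @ trim2 p w"
proof (induction p w rule: trim2.induct)
  case (2 p x w)
  show ?case
  proof (cases "2 \<le> count_list p x")
    case True
    then have "p @ x # w \<simeq> p @ w" by (rule delete_third)
    also have "\<dots> \<simeq> p @ trim2 p w" using "2.IH"(1) True .
    finally show ?thesis using True by simp
  next
    case False
    have "p @ x # w = (p @ [x]) @ w" by simp
    also have "\<dots> \<simeq> (p @ [x]) @ trim2 (p @ [x]) w" using "2.IH"(2) False .
    finally show ?thesis using False by simp
  qed
qed simp

lemma eqv_of_before_first_msets: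
  assumes "mset u = mset v"
    and "\<forall>t\<in>set u. count_list (u @ q) t = 1 \<longrightarrow> mset (before_first t u) = mset (before_first t v)"
  shows "u @ q \<simeq> v @ q"
  using assms
proof (induction "length u" arbitrary: u v q rule: less_induct)
  \<comment> \<open>Split \<open>u\<close> at its last letter \<open>t\<close> occurring once in \<open>u @ q\<close>: behind \<open>t\<close> all letters are
    repeated and may be permuted, and in front of \<open>t\<close> we recurse with context \<open>t # S @ q\<close>.\<close>
  case less
  have repeated: "2 \<le> count_list (u @ q) x" if "x \<in> set u" "count_list (u @ q) x \<noteq> 1" for x
  proof -
    have "0 < count_list (u @ q) x" using that(1) by (simp add: count_list_pos_iff)
    with that(2) show ?thesis by linarith
  qed
  show ?case
  proof (cases "\<exists>t\<in>set u. count_list (u @ q) t = 1")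
    case False
    then have "\<forall>x\<in>set u. 2 \<le> count_list ([] @ u @ q) x" using repeated by auto
    then show ?thesis using permute_repeated[OF less.prems(1), of "[]" q] by simp
  next
    case True
    then obtain P t S where u: "u = P @ t # S" and t: "count_list (u @ q) t = 1"
      and S: "\<forall>y\<in>set S. count_list (u @ q) y \<noteq> 1"
      using split_list_last_prop[of u "\<lambda>t. count_list (u @ q) t = 1"] by blast
    have "t \<in> set v" using less.prems(1) u by (metis in_set_conv_decomp mset_eq_setD)
    then obtain P' S' where v: "v = P' @ t # S'" and "t \<notin> set P'" by (meson split_list_first)
    have "count_list P t = 0" using t u by simp
    then have "t \<notin> set P" by (simp add: count_list_0_iff)
    have "mset (before_first t u) = mset (before_first t v)"
      using less.prems(2) t u by simp
    then have mset_P: "mset P = mset P'"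
      using u v \<open>t \<notin> set P\<close> \<open>t \<notin> set P'\<close> by (simp add: before_first_append)
    then have mset_S: "mset S = mset S'" using less.prems(1) u v by simp
    have "P @ (t # S @ q) \<simeq> P' @ (t # S @ q)"
    proof (rule less.hyps)
      show "length P < length u" using u by simp
      show "mset P = mset P'" by fact
      show "\<forall>t'\<in>set P. count_list (P @ t # S @ q) t' = 1 \<longrightarrow>
          mset (before_first t' P) = mset (before_first t' P')"
      proof (intro ballI impI)
        fix t' assume "t' \<in> set P" and "count_list (P @ t # S @ q) t' = 1"
        then have "mset (before_first t' u) = mset (before_first t' v)"
          using less.prems(2) u by simp
        moreover have "t' \<in> set P'" using \<open>t' \<in> set P\<close> mset_eq_setD[OF mset_P] by simp
        ultimately show "mset (before_first t' P) = mset (before_first t' P')"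
          using u v \<open>t' \<in> set P\<close> by (simp add: before_first_append)
      qed
    qed
    also have "\<dots> = (P' @ [t]) @ S @ q" by simp
    also have "\<dots> \<simeq> (P' @ [t]) @ S' @ q"
    proof (rule permute_repeated[OF mset_S])
      have "count_list (u @ q) y = count_list ((P' @ [t]) @ S @ q) y" for y
        using u mset_P by (simp flip: count_mset)
      then show "\<forall>y\<in>set S. 2 \<le> count_list ((P' @ [t]) @ S @ q) y"
        using S repeated u by fastforce
    qed
    finally show ?thesis using u v by simp
  qed
qed

lemma F_invariant_imp_eqv:
  assumes "F_invariant u v"
  shows "u \<simeq> v"
proof -
  have agree: "counts_agree_upto2 u v"
    and before: "\<And>t. count_list u t = 1 \<Longrightarrow>
      counts_agree_upto2 (before_first t u) (before_first t v)"
    using assms by (auto simp: F_invariant_def)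
  have "trim2 [] u @ [] \<simeq> trim2 [] v @ []"
  proof (rule eqv_of_before_first_msets)
    show "mset (trim2 [] u) = mset (trim2 [] v)"
      using agree by (simp add: multiset_eq_iff count_mset count_list_trim2 counts_agree_upto2_def)
    show "\<forall>t\<in>set (trim2 [] u). count_list (trim2 [] u @ []) t = 1 \<longrightarrow>
        mset (before_first t (trim2 [] u)) = mset (before_first t (trim2 [] v))"
    proof (intro ballI impI)
      fix t assume "count_list (trim2 [] u @ []) t = 1"
      then have "count_list u t = 1" by (simp add: count_list_trim2 min_def split: if_splits)
      then show "mset (before_first t (trim2 [] u)) = mset (before_first t (trim2 [] v))"
        using before by (simp add: before_first_trim2 multiset_eq_iff count_mset count_list_trim2
            counts_agree_upto2_def)
    qed
  qed
  then show ?thesis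
    using eqv_trans[OF eqv_trans[OF trim2_eqv[of "[]" u]] eqv_sym[OF trim2_eqv[of "[]" v]]] by simp
qed

end

theorem lemma2p3:
  fixes V :: "(word \<times> word) set"
  assumes "is_variety V"
    and "satisfies V [vx,vy,vx] [vx,vy,vx,vx]"
    and "satisfies V [vx,vx,vy,vy] [vy,vy,vx,vx]"
  shows "(\<not> subvariety varE V \<longrightarrow> subvariety V varK)
       \<and> (\<not> subvariety varF V \<longrightarrow> subvariety V varQ)"
proof -
  interpret V_theory V
    using assms by unfold_locales (simp_all add: is_variety_def satisfies_def)
  interpret E: E_theory "eq_cl E_ids"
    by unfold_locales (auto simp: eq_cl_idem E_ids_def intro: eq_cl.base)
  interpret F: F_theory "eq_cl F_ids"
    by unfold_locales (auto simp: eq_cl_idem F_ids_def intro: eq_cl.base)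
  have base: "([0,1,0], [0,1,0,0]) \<in> V" "([0,0,1,1], [1,1,0,0]) \<in> V"
    using assms(2,3) by (simp_all add: satisfies_def)
  show ?thesis
  proof (intro conjI impI)
    assume "\<not> subvariety varE V"
    then obtain u v where "(u, v) \<in> V" and "(u, v) \<notin> eq_cl E_ids"
      by (auto simp: subvariety_def varE_def var_def_by_def)
    then have "\<not> E_invariant u v" using E.E_invariant_imp_eqv[unfolded E.eqv_def] by blast
    then have "([0,0,1], [0,0,1,0]) \<in> V"
      using K_law_of_not_E_invariant[unfolded eqv_def] \<open>(u, v) \<in> V\<close> by blast
    then show "subvariety V varK"
      using base by (simp add: varK_def subvariety_var_def_by_iff[OF assms(1)] K_ids_def)
  next
    assume "\<not> subvariety varF V"
    then obtain u v where "(u, v) \<in> V" and "(u, v) \<notin> eq_cl F_ids"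
      by (auto simp: subvariety_def varF_def var_def_by_def)
    then have "\<not> F_invariant u v" using F.F_invariant_imp_eqv[unfolded F.eqv_def] by blast
    then have "([0,1,0], [0,0,1,0]) \<in> V"
      using Q_law_of_not_F_invariant[unfolded eqv_def] \<open>(u, v) \<in> V\<close> by blast
    then show "subvariety V varQ"
      using base by (simp add: varQ_def subvariety_var_def_by_iff[OF assms(1)] Q_ids_def)
  qed
qed
end
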